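(* Define $A(n_1,n_2,n_3,n_4)$ for $n_1,\dots,n_4 \in \mathbb{Z}_{\geq 0}$ by $$\frac{1}{(1 - x_1 - x_2)(1 - x_3 - x_4) - x_1 x_2 x_3 x_4} = \sum_{n_1,n_2,n_3,n_4 \geq 0} A(n_1,n_2,n_3,n_4)\, x_1^{n_1}x_2^{n_2}x_3^{n_3}x_4^{n_4}.$$ Then for all $n_1,\dots,n_4 \geq 0$, $$A(n_1,n_2,n_3,n_4) = \sum_{k \in \mathbb{Z}} \binom{n_1}{k}\binom{n_3}{k}\binom{n_1+n_2-k}{n_1}\binom{n_3+n_4-k}{n_3},$$ and moreover $A(n_1,n_2,n_3,n_4)$ is the constant term of the Laurent polynomial $$\frac{(x_1+x_2+x_3)^{n_1}(x_1+x_2)^{n_2}(x_3+x_4)^{n_3}(x_2+x_3+x_4)^{n_4}}{x_1^{n_1}x_2^{n_2}x_3^{n_3}x_4^{n_4}}.$$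
   Context: Binomial coefficients with integer entries are the usual ones; $\binom{n}{k}=0$ for $k<0$ or $k>n$ when $n \ge 0$. *)

theory Defs
  imports Main "HOL-Library.Function_Algebras"
begin

text \<open>Formal power series (and polynomials) in four commuting variables
  x1,x2,x3,x4 with integer coefficients, represented by their coefficient
  functions: f (a,b,c,d) is the coefficient of x1^a x2^b x3^c x4^d.
  Addition/subtraction are pointwise (the function-space instances).\<close>

type_synonym ps4 = "nat \<times> nat \<times> nat \<times> nat \<Rightarrow> int"

definition ps_mult :: "ps4 \<Rightarrow> ps4 \<Rightarrow> ps4" where
  "ps_mult f g = (\<lambda>(a,b,c,d). \<Sum>i\<le>a. \<Sum>j\<le>b. \<Sum>k\<le>c. \<Sum>l\<le>d.
      f (i,j,k,l) * g (a-i, b-j, c-k, d-l))"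

definition ps_mono :: "nat \<times> nat \<times> nat \<times> nat \<Rightarrow> ps4" where
  "ps_mono m = (\<lambda>n. if n = m then 1 else 0)"

definition ps_one :: ps4 where
  "ps_one = ps_mono (0,0,0,0)"

definition x1 :: ps4 where "x1 = ps_mono (1,0,0,0)"
definition x2 :: ps4 where "x2 = ps_mono (0,1,0,0)"
definition x3 :: ps4 where "x3 = ps_mono (0,0,1,0)"
definition x4 :: ps4 where "x4 = ps_mono (0,0,0,1)"

definition ps_pow :: "ps4 \<Rightarrow> nat \<Rightarrow> ps4" where
  "ps_pow f n = (ps_mult f ^^ n) ps_one"

definition denomA :: ps4 where
  "denomA = ps_mult (ps_one - x1 - x2) (ps_one - x3 - x4)
            - ps_mult (ps_mult x1 x2) (ps_mult x3 x4)"

definition coeffA :: ps4 where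
  "coeffA = (THE a. ps_mult denomA a = ps_one)"

definition numerA :: "nat \<Rightarrow> nat \<Rightarrow> nat \<Rightarrow> nat \<Rightarrow> ps4" where
  "numerA n1 n2 n3 n4 =
     ps_mult (ps_mult (ps_pow (x1 + x2 + x3) n1) (ps_pow (x1 + x2) n2))
             (ps_mult (ps_pow (x3 + x4) n3) (ps_pow (x2 + x3 + x4) n4))"

end

theory Submission
  imports Defs "HOL-Computational_Algebra.Formal_Power_Series"
begin

unbundle fps_syntax

text \<open>For fixed \<open>k\<close> the Delannoy summands \<open>d_k(a,b) = C(a,k) C(a+b-k,a)\<close> have generating
  function \<open>D_k = (xy)^k / (1-x-y)^(k+1)\<close>, i.e. \<open>(1-x-y) D_k = xy D_(k-1)\<close>. With
  \<open>u = 1-x1-x2\<close>, \<open>v = 1-x3-x4\<close> and \<open>w = x1 x2 x3 x4\<close> the series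
  \<open>\<Sum>_k D_k(x1,x2) D_k(x3,x4)\<close> is therefore \<open>\<Sum>_k w^k / (uv)^(k+1) = 1/(uv - w)\<close>; this is
  checked coefficientwise, where multiplying by \<open>uv - w\<close> telescopes.
  For the constant term, expand \<open>(x3 + (x1+x2))^n1\<close> and \<open>(x2 + (x3+x4))^n4\<close> binomially:
  only terms with equal powers of \<open>x2\<close> and \<open>x3\<close> contribute, and they give the same sum
  up to the symmetry \<open>d_k(a,b) = d_k(b,a)\<close>.\<close>

definition delannoy_term :: "nat \<Rightarrow> nat \<Rightarrow> nat \<Rightarrow> nat" where
  "delannoy_term a b k = (a choose k) * ((a + b - k) choose a)"

lemma delannoy_term_eq_0: "a < k \<or> b < k \<Longrightarrow> delannoy_term a b k = 0"
  by (auto simp: delannoy_term_def binomial_eq_0_iff)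

lemma delannoy_term_0_left: "delannoy_term 0 b k = of_bool (k = 0)"
  by (simp add: delannoy_term_def)

lemma delannoy_term_commute: "delannoy_term a b k = delannoy_term b a k"
proof (cases "k \<le> a \<and> k \<le> b")
  case True
  define n where "n = a + b - k"
  have "a \<le> n" "b \<le> n" "a - k \<le> n - k" "n - k - (a - k) = b - k"
    using True by (auto simp: n_def)
  have "delannoy_term a b k = (n choose k) * ((n - k) choose (a - k))"
    using True choose_mult[OF _ \<open>a \<le> n\<close>, of k] by (simp add: delannoy_term_def n_def mult.commute)
  also have "(n - k) choose (a - k) = (n - k) choose (b - k)"
    using \<open>a - k \<le> n - k\<close> \<open>n - k - (a - k) = b - k\<close> by (metis binomial_symmetric)
  also have "(n choose k) * ((n - k) choose (b - k)) = delannoy_term b a k"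
    using True choose_mult[OF _ \<open>b \<le> n\<close>, of k] by (simp add: delannoy_term_def n_def mult.commute add.commute)
  finally show ?thesis .
qed (auto simp: delannoy_term_eq_0)

lemma delannoy_term_0_right: "delannoy_term a 0 k = of_bool (k = 0)"
  by (simp add: delannoy_term_commute[of a] delannoy_term_0_left)

lemma delannoy_term_Suc_Suc_Suc:
  "delannoy_term (Suc a) (Suc b) (Suc k) =
     delannoy_term a (Suc b) (Suc k) + delannoy_term (Suc a) b (Suc k) + delannoy_term a b k"
proof (cases "k \<le> a")
  case True
  define n where "n = a + b - k"
  have n: "a + Suc b - Suc k = n" "Suc a + b - Suc k = n" "Suc a + Suc b - Suc k = Suc n"
    using True by (auto simp: n_def)
  show ?thesis
    unfolding delannoy_term_def n by (simp add: algebra_simps n_def)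
qed (simp add: delannoy_term_def not_le binomial_eq_0)

text \<open>Extension by zero to negative indices, so that shifting coefficients by the monomials
  of the denominator needs no case distinction.\<close>

definition delannoy_term_int :: "int \<Rightarrow> int \<Rightarrow> nat \<Rightarrow> int" where
  "delannoy_term_int a b k =
     (if a < 0 \<or> b < 0 then 0 else int (delannoy_term (nat a) (nat b) k))"

lemma delannoy_term_int_eq_0: "a < int k \<Longrightarrow> delannoy_term_int a b k = 0"
  by (simp add: delannoy_term_int_def delannoy_term_eq_0 nat_less_iff)

text \<open>Coefficientwise form of \<open>(1-x-y) D_k = xy D_(k-1)\<close> and \<open>(1-x-y) D_0 = 1\<close>.\<close>

lemma delannoy_term_int_recurrence:
  assumes "a \<ge> 0" "b \<ge> 0"
  shows "delannoy_term_int a b k - delannoy_term_int (a - 1) b k - delannoy_term_int a (b - 1) k =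
    (if k = 0 then of_bool (a = 0 \<and> b = 0) else delannoy_term_int (a - 1) (b - 1) (k - 1))"
proof -
  obtain a' b' where ab: "a = int a'" "b = int b'" using assms by (metis nonneg_eq_int)
  have [simp]: "nat (1 + int n) = Suc n" for n by simp
  show ?thesis
    unfolding ab
    by (cases a'; cases b'; cases k)
       (simp_all add: delannoy_term_int_def delannoy_term_0_left delannoy_term_0_right
          delannoy_term_Suc_Suc_Suc delannoy_term_def[of _ _ 0])
qed

text \<open>Since \<open>ps_mult\<close> is the Cauchy product, \<open>fps4_of\<close> is a ring isomorphism onto
  iterated formal power series, where the ring laws are available.\<close>

type_synonym fps4 = "int fps fps fps fps"

definition fps4_of :: "ps4 \<Rightarrow> fps4" where
  "fps4_of f = Abs_fps (\<lambda>a. Abs_fps (\<lambda>b. Abs_fps (\<lambda>c. Abs_fps (\<lambda>d. f (a,b,c,d)))))"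

definition coeff4 :: "fps4 \<Rightarrow> ps4" where
  "coeff4 F = (\<lambda>(a,b,c,d). F $ a $ b $ c $ d)"

lemma coeff4_fps4_of [simp]: "coeff4 (fps4_of f) = f"
  by (auto simp: coeff4_def fps4_of_def)

lemma fps4_of_coeff4 [simp]: "fps4_of (coeff4 F) = F"
  by (simp add: coeff4_def fps4_of_def fps_eq_iff)

lemma fps4_of_inject: "fps4_of f = fps4_of g \<longleftrightarrow> f = g"
  by (metis coeff4_fps4_of)

lemma fps4_of_plus: "fps4_of (f + g) = fps4_of f + fps4_of g"
  by (simp add: fps4_of_def fps_eq_iff)

lemma fps4_of_minus: "fps4_of (f - g) = fps4_of f - fps4_of g"
  by (simp add: fps4_of_def fps_eq_iff)

lemma coeff4_plus: "coeff4 (F + G) = coeff4 F + coeff4 G"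
  by (auto simp: coeff4_def)

lemma coeff4_minus: "coeff4 (F - G) = coeff4 F - coeff4 G"
  by (auto simp: coeff4_def)

lemma coeff4_mult: "coeff4 (F * G) = ps_mult (coeff4 F) (coeff4 G)"
  by (auto simp: coeff4_def ps_mult_def fps_mult_nth fps_sum_nth atLeast0AtMost)

lemma fps4_of_ps_mult: "fps4_of (ps_mult f g) = fps4_of f * fps4_of g"
  by (metis coeff4_mult coeff4_fps4_of fps4_of_coeff4)

lemma fps4_of_ps_one: "fps4_of ps_one = 1"
  by (auto simp: fps4_of_def ps_one_def ps_mono_def fps_eq_iff)

lemma fps4_of_ps_pow: "fps4_of (ps_pow f n) = fps4_of f ^ n"
  by (induction n) (simp_all add: ps_pow_def fps4_of_ps_one fps4_of_ps_mult)

definition X1 :: fps4 where "X1 = fps_X"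
definition X2 :: fps4 where "X2 = fps_const fps_X"
definition X3 :: fps4 where "X3 = fps_const (fps_const fps_X)"
definition X4 :: fps4 where "X4 = fps_const (fps_const (fps_const fps_X))"

lemma fps4_of_x1: "fps4_of x1 = X1"
  by (auto simp: fps4_of_def x1_def X1_def ps_mono_def fps_eq_iff fps_X_def)
lemma fps4_of_x2: "fps4_of x2 = X2"
  by (auto simp: fps4_of_def x2_def X2_def ps_mono_def fps_eq_iff fps_X_def)
lemma fps4_of_x3: "fps4_of x3 = X3"
  by (auto simp: fps4_of_def x3_def X3_def ps_mono_def fps_eq_iff fps_X_def)
lemma fps4_of_x4: "fps4_of x4 = X4"
  by (auto simp: fps4_of_def x4_def X4_def ps_mono_def fps_eq_iff fps_X_def)

definition mon4 :: "nat \<Rightarrow> nat \<Rightarrow> nat \<Rightarrow> nat \<Rightarrow> fps4" where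
  "mon4 i j k l = X1 ^ i * X2 ^ j * X3 ^ k * X4 ^ l"

lemma coeff4_mon4_mult:
  "coeff4 (mon4 i j k l * G) (a,b,c,d) =
     (if i \<le> a \<and> j \<le> b \<and> k \<le> c \<and> l \<le> d then coeff4 G (a-i, b-j, c-k, d-l) else 0)"
  by (simp add: coeff4_def mon4_def X1_def X2_def X3_def X4_def mult.assoc fps_const_power
        fps_X_power_mult_nth not_less)

lemma coeff4_one: "coeff4 1 (a,b,c,d) = of_bool (a = 0 \<and> b = 0 \<and> c = 0 \<and> d = 0)"
  by (simp add: coeff4_def)

lemma coeff4_sum: "coeff4 (sum F S) n = (\<Sum>x\<in>S. coeff4 (F x) n)"
  by (cases n) (simp add: coeff4_def fps_sum_nth)

lemma coeff4_of_nat_mult: "coeff4 (of_nat m * F) n = int m * coeff4 F n"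
  by (cases n) (simp add: coeff4_def)

lemma coeff4_mon4: "coeff4 (mon4 i j k l) (a,b,c,d) = of_bool (i = a \<and> j = b \<and> k = c \<and> l = d)"
  using coeff4_mon4_mult[of i j k l 1 a b c d] by (auto simp: coeff4_one)

definition delannoy_pairing :: ps4 where
  "delannoy_pairing =
     (\<lambda>(a,b,c,d). int (\<Sum>k\<le>a. delannoy_term a b k * delannoy_term c d k))"

text \<open>A summation bound independent of the shift lets the ten shifted coefficients of
  \<open>denomA * delannoy_pairing\<close> be combined termwise; \<open>Suc a\<close> leaves room to split off \<open>m = 0\<close>.\<close>

lemma coeff4_mon4_mult_delannoy_pairing:
  "coeff4 (mon4 i j k l * fps4_of delannoy_pairing) (a,b,c,d) =
     (\<Sum>m\<le>Suc a. delannoy_term_int (int a - int i) (int b - int j) m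
                   * delannoy_term_int (int c - int k) (int d - int l) m)"
proof (cases "i \<le> a \<and> j \<le> b \<and> k \<le> c \<and> l \<le> d")
  case True
  then have "coeff4 (mon4 i j k l * fps4_of delannoy_pairing) (a,b,c,d) =
      (\<Sum>m\<le>a - i. delannoy_term_int (int (a - i)) (int (b - j)) m
                  * delannoy_term_int (int (c - k)) (int (d - l)) m)"
    by (simp add: coeff4_mon4_mult delannoy_pairing_def delannoy_term_int_def flip: of_nat_diff)
  also have "\<dots> = (\<Sum>m\<le>Suc a. delannoy_term_int (int (a - i)) (int (b - j)) m
                  * delannoy_term_int (int (c - k)) (int (d - l)) m)"
    by (rule sum.mono_neutral_left) (auto simp: delannoy_term_int_eq_0)
  finally show ?thesis
    using True by (simp add: of_nat_diff)
qed (auto simp: coeff4_mon4_mult delannoy_term_int_def)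

lemma fps4_of_denomA_mult:
  "fps4_of denomA * G =
     mon4 0 0 0 0 * G - mon4 1 0 0 0 * G - mon4 0 1 0 0 * G - mon4 0 0 1 0 * G - mon4 0 0 0 1 * G
     + mon4 1 0 1 0 * G + mon4 1 0 0 1 * G + mon4 0 1 1 0 * G + mon4 0 1 0 1 * G
     - mon4 1 1 1 1 * G"
  by (simp add: denomA_def mon4_def fps4_of_plus fps4_of_minus fps4_of_ps_mult fps4_of_ps_one
      fps4_of_x1 fps4_of_x2 fps4_of_x3 fps4_of_x4 algebra_simps)

lemma fps4_of_denomA_mult_delannoy_pairing: "fps4_of denomA * fps4_of delannoy_pairing = 1"
proof -
  let ?P = delannoy_term_int
  define U where "U x y m = ?P x y m - ?P (x - 1) y m - ?P x (y - 1) m" for x y m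
  have U: "U x y m = (if m = 0 then of_bool (x = 0 \<and> y = 0) else ?P (x - 1) (y - 1) (m - 1))"
    if "x \<ge> 0" "y \<ge> 0" for x y m
    using delannoy_term_int_recurrence[OF that] by (simp add: U_def)
  have "coeff4 (fps4_of denomA * fps4_of delannoy_pairing) (a,b,c,d) = coeff4 1 (a,b,c,d)"
    for a b c d
  proof -
    define A B C D where "A = int a" and "B = int b" and "C = int c" and "D = int d"
    have nonneg: "A \<ge> 0" "B \<ge> 0" "C \<ge> 0" "D \<ge> 0"
      by (simp_all add: A_def B_def C_def D_def)
    have "coeff4 (fps4_of denomA * fps4_of delannoy_pairing) (a,b,c,d) =
        (\<Sum>m\<le>Suc a. U A B m * U C D m) - (\<Sum>m\<le>Suc a. ?P (A - 1) (B - 1) m * ?P (C - 1) (D - 1) m)"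
      unfolding fps4_of_denomA_mult coeff4_plus coeff4_minus plus_fun_apply minus_apply
        coeff4_mon4_mult_delannoy_pairing
      by (simp add: U_def A_def B_def C_def D_def sum_subtractf sum.distrib algebra_simps)
    also have "(\<Sum>m\<le>Suc a. U A B m * U C D m) =
        U A B 0 * U C D 0 + (\<Sum>m\<le>a. ?P (A - 1) (B - 1) m * ?P (C - 1) (D - 1) m)"
      by (subst sum.atMost_Suc_shift) (simp add: U nonneg)
    also have "(\<Sum>m\<le>Suc a. ?P (A - 1) (B - 1) m * ?P (C - 1) (D - 1) m) =
        (\<Sum>m\<le>a. ?P (A - 1) (B - 1) m * ?P (C - 1) (D - 1) m)"
      by (simp add: A_def delannoy_term_int_eq_0)
    finally show ?thesis
      by (simp add: U nonneg coeff4_one A_def B_def C_def D_def)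
  qed
  then have "coeff4 (fps4_of denomA * fps4_of delannoy_pairing) = coeff4 1"
    by auto
  then show ?thesis
    by (metis fps4_of_coeff4)
qed

lemma coeffA_eq_delannoy_pairing: "coeffA = delannoy_pairing"
  unfolding coeffA_def
proof (rule the_equality)
  show "ps_mult denomA delannoy_pairing = ps_one"
    by (rule fps4_of_inject[THEN iffD1])
      (simp add: fps4_of_ps_mult fps4_of_ps_one fps4_of_denomA_mult_delannoy_pairing)
next
  fix g assume "ps_mult denomA g = ps_one"
  then have "fps4_of denomA * fps4_of g = 1"
    by (metis fps4_of_ps_mult fps4_of_ps_one)
  have "fps4_of g = fps4_of g * (fps4_of denomA * fps4_of delannoy_pairing)"
    by (simp add: fps4_of_denomA_mult_delannoy_pairing)
  also have "\<dots> = (fps4_of denomA * fps4_of g) * fps4_of delannoy_pairing"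
    by (simp only: ac_simps)
  also have "\<dots> = fps4_of delannoy_pairing"
    by (simp add: \<open>fps4_of denomA * fps4_of g = 1\<close>)
  finally show "g = delannoy_pairing"
    by (simp add: fps4_of_inject)
qed

lemma binomial_ring_mult_power:
  fixes a b :: "'a :: comm_semiring_1"
  shows "(a + b) ^ n * b ^ m = (\<Sum>k\<le>n. of_nat (n choose k) * a ^ k * b ^ (n + m - k))"
proof -
  have "(a + b) ^ n * b ^ m = (\<Sum>k\<le>n. of_nat (n choose k) * a ^ k * (b ^ (n - k) * b ^ m))"
    by (simp add: binomial_ring sum_distrib_right mult.assoc)
  also have "\<dots> = (\<Sum>k\<le>n. of_nat (n choose k) * a ^ k * b ^ (n + m - k))"
    by (intro sum.cong refl) (simp flip: power_add)
  finally show ?thesis .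
qed

lemma coeff4_X1_plus_X2_power_mult_X3_plus_X4_power:
  "coeff4 ((X1 + X2) ^ m * (X3 + X4) ^ m') (a,b,c,d) =
     (if a + b = m \<and> c + d = m' then int ((m choose a) * (m' choose c)) else 0)"
    (is "_ = ?g")
proof -
  have expand: "(X1 + X2) ^ m * (X3 + X4) ^ m' =
      (\<Sum>i\<le>m. \<Sum>j\<le>m'. of_nat ((m choose i) * (m' choose j)) * mon4 i (m - i) j (m' - j))"
    by (simp add: binomial_ring sum_product mon4_def algebra_simps)
  have "coeff4 ((X1 + X2) ^ m * (X3 + X4) ^ m') (a,b,c,d) =
      (\<Sum>i\<le>m. \<Sum>j\<le>m'. if i = a then if j = c then ?g else 0 else 0)"
    unfolding expand coeff4_sum coeff4_of_nat_mult coeff4_mon4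
    by (intro sum.cong refl) auto
  also have "\<dots> = (\<Sum>i\<le>m. if i = a then \<Sum>j\<le>m'. if j = c then ?g else 0 else 0)"
    by (intro sum.cong refl) simp
  also have "\<dots> = ?g"
    by auto
  finally show ?thesis .
qed

lemma fps4_of_numerA:
  "fps4_of (numerA n1 n2 n3 n4) =
     (\<Sum>k\<le>n1. \<Sum>k'\<le>n4. of_nat ((n1 choose k) * (n4 choose k')) *
        (mon4 0 k' k 0 * ((X1 + X2) ^ (n1 + n2 - k) * (X3 + X4) ^ (n3 + n4 - k'))))"
proof -
  have "fps4_of (numerA n1 n2 n3 n4) =
      ((X3 + (X1 + X2)) ^ n1 * (X1 + X2) ^ n2) * ((X2 + (X3 + X4)) ^ n4 * (X3 + X4) ^ n3)"
    by (simp add: numerA_def fps4_of_ps_mult fps4_of_ps_pow fps4_of_plus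
        fps4_of_x1 fps4_of_x2 fps4_of_x3 fps4_of_x4 ac_simps)
  also have "\<dots> = (\<Sum>k\<le>n1. \<Sum>k'\<le>n4. of_nat ((n1 choose k) * (n4 choose k')) *
        (mon4 0 k' k 0 * ((X1 + X2) ^ (n1 + n2 - k) * (X3 + X4) ^ (n4 + n3 - k'))))"
    unfolding binomial_ring_mult_power sum_product
    by (intro sum.cong refl) (simp add: mon4_def ac_simps)
  finally show ?thesis
    by (simp add: add.commute)
qed

lemma coeff4_numerA_summand:
  assumes "k \<le> n1"
  shows "coeff4 (of_nat ((n1 choose k) * (n4 choose k')) *
            (mon4 0 k' k 0 * ((X1 + X2) ^ (n1 + n2 - k) * (X3 + X4) ^ (n3 + n4 - k'))))
            (n1,n2,n3,n4) =
         (if k' = k then int (delannoy_term n1 n2 k * delannoy_term n4 n3 k) else 0)"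
proof (cases "k' = k \<and> k \<le> n2 \<and> k \<le> n3")
  case True
  have "n3 + n4 - k - n4 = n3 - k" "n4 \<le> n3 + n4 - k" using True by auto
  then have "(n3 + n4 - k) choose n4 = (n3 + n4 - k) choose (n3 - k)"
    by (metis binomial_symmetric)
  then show ?thesis
    using True assms
    unfolding coeff4_of_nat_mult coeff4_mon4_mult coeff4_X1_plus_X2_power_mult_X3_plus_X4_power
    by (simp add: delannoy_term_def add.commute)
next
  case False
  then have "\<not> (k' \<le> n2 \<and> k \<le> n3 \<and> n1 + (n2 - k') = n1 + n2 - k)"
    using assms by auto
  moreover have "k' = k \<Longrightarrow> delannoy_term n1 n2 k * delannoy_term n4 n3 k = 0"
    using False by (auto simp: delannoy_term_eq_0)
  ultimately show ?thesis
    unfolding coeff4_of_nat_mult coeff4_mon4_mult coeff4_X1_plus_X2_power_mult_X3_plus_X4_power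
    by auto
qed

lemma numerA_diagonal_coeff: "numerA n1 n2 n3 n4 (n1,n2,n3,n4) = delannoy_pairing (n1,n2,n3,n4)"
proof -
  have "numerA n1 n2 n3 n4 (n1,n2,n3,n4) = coeff4 (fps4_of (numerA n1 n2 n3 n4)) (n1,n2,n3,n4)"
    by simp
  also have "\<dots> =
      (\<Sum>k\<le>n1. \<Sum>k'\<le>n4. if k' = k then int (delannoy_term n1 n2 k * delannoy_term n4 n3 k) else 0)"
    unfolding fps4_of_numerA coeff4_sum
    by (intro sum.cong refl) (simp add: coeff4_numerA_summand del: of_nat_mult)
  also have "\<dots> = (\<Sum>k\<le>n1. int (delannoy_term n1 n2 k * delannoy_term n4 n3 k))"
    by (intro sum.cong refl) (auto simp: delannoy_term_eq_0)
  finally show ?thesis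
    by (simp add: delannoy_pairing_def delannoy_term_commute[of n4])
qed

lemma delannoy_pairing_eq_binomial_sum:
  "delannoy_pairing (n1,n2,n3,n4) =
     int (\<Sum>k\<in>{0..min n1 n3}. (n1 choose k) * (n3 choose k)
            * ((n1 + n2 - k) choose n1) * ((n3 + n4 - k) choose n3))"
proof -
  have "(\<Sum>k\<le>n1. delannoy_term n1 n2 k * delannoy_term n3 n4 k) =
      (\<Sum>k\<in>{0..min n1 n3}. delannoy_term n1 n2 k * delannoy_term n3 n4 k)"
    by (rule sum.mono_neutral_right) (auto simp: delannoy_term_eq_0)
  then show ?thesis
    by (simp add: delannoy_pairing_def delannoy_term_def ac_simps del: of_nat_sum)
qed

theorem mainTheorem2:
  fixes n1 n2 n3 n4 :: nat
  shows "coeffA (n1,n2,n3,n4) =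
           int (\<Sum>k\<in>{0..min n1 n3}. (n1 choose k) * (n3 choose k)
                  * ((n1 + n2 - k) choose n1) * ((n3 + n4 - k) choose n3))
       \<and> coeffA (n1,n2,n3,n4) = numerA n1 n2 n3 n4 (n1,n2,n3,n4)"
  by (simp add: coeffA_eq_delannoy_pairing delannoy_pairing_eq_binomial_sum numerA_diagonal_coeff)

end
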